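(* Let $\gamma > 1$ be a real number and let $N$ be an integer with $N > 6$. Let $\alpha^{*}$ denote the smallest strictly positive root of the equation $$1-\cos(\alpha) - \frac{\alpha^2}{2\gamma}=0 .$$ Then for every real $z \in \left[-\frac{\alpha^{*}}{N}, \frac{\alpha^{*}}{N}\right]$ the inequality $$\cos(z) - \frac{\gamma}{N^2}\bigl(\cos(Nz) - 1\bigr) - 1 \geq 0$$ holds.
   Context: $N$ is the number of antennas of a uniform linear array and $\gamma$ plays the role of the allowed array-gain degradation factor (a linear-scale ratio $10^{\gamma_{\mathrm{dB}}/10}$, hence strictly greater than $1$). *)

theory Defs
  imports "HOL-Analysis.Analysis"
begin

end

theory Submission
  imports Defs "HOL-Real_Asymp.Real_Asymp"
begin

(* Since (1 - cos a) / a^2 tends to 1/2 > 1/(2 gamma), the function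
   g a = 1 - cos a - a^2/(2 gamma) is positive just to the right of 0; having no zero before
   alpha*, it is nonnegative on [-alpha*, alpha*] by the intermediate value theorem. At N z this
   gives gamma/N^2 (1 - cos (N z)) >= z^2/2, which dominates 1 - cos z. *)

lemma one_minus_cos_le_half_square: "1 - cos (t::real) \<le> t^2 / 2"
proof -
  have "cos t = 1 - 2 * (sin (t/2))^2"
    using cos_double_sin[of "t/2"] by simp
  moreover have "(sin (t/2))^2 \<le> (t/2)^2"
    using abs_sin_x_le_abs_x[of "t/2"] by (metis abs_ge_zero power2_abs power_mono)
  ultimately show ?thesis
    by (simp add: power_divide)
qed

lemma eventually_quadratic_less_one_minus_cos:
  fixes c :: real
  assumes "c < 1/2"
  shows "eventually (\<lambda>a. c * a^2 < 1 - cos a) (at_right 0)"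
proof -
  have "((\<lambda>a::real. (1 - cos a) / a^2) \<longlongrightarrow> 1/2) (at_right 0)"
    by real_asymp
  then have "eventually (\<lambda>a. c < (1 - cos a) / a^2) (at_right 0)"
    using assms order_tendstoD(1) by blast
  moreover have "eventually (\<lambda>a::real. a > 0) (at_right 0)"
    by (simp add: eventually_at_right_less)
  ultimately show ?thesis
    by eventually_elim (simp add: field_simps)
qed

lemma pos_before_first_zero:
  fixes f :: "real \<Rightarrow> real"
  assumes cont: "continuous_on {a<..<b} f"
    and pos_near: "eventually (\<lambda>x. f x > 0) (at_right a)"
    and no_zero: "\<And>x. a < x \<Longrightarrow> x < b \<Longrightarrow> f x \<noteq> 0"
    and x: "a < x" "x < b"
  shows "f x > 0"
proof (rule ccontr)
  assume "\<not> f x > 0"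
  with no_zero x have neg: "f x < 0"
    by force
  obtain e where e: "e > a" "\<And>y. a < y \<Longrightarrow> y < e \<Longrightarrow> f y > 0"
    using pos_near unfolding eventually_at_right_field by auto
  define y where "y = (a + min e x) / 2"
  have y: "a < y" "y < x" "f y > 0"
    using e x unfolding y_def by auto
  have "continuous_on {y..x} f"
    using cont by (rule continuous_on_subset) (use x y in auto)
  then obtain c where "y \<le> c" "c \<le> x" "f c = 0"
    using IVT2'[of f x 0 y] y neg by force
  then show False
    using no_zero[of c] x y by auto
qed

lemma quadratic_le_one_minus_cos_up_to_first_root:
  fixes \<gamma> \<alpha> x :: real
  assumes "\<gamma> > 1"
    and root: "1 - cos \<alpha> - \<alpha>^2 / (2*\<gamma>) = 0"
    and first_root: "\<And>a. 0 < a \<Longrightarrow> a < \<alpha> \<Longrightarrow> 1 - cos a - a^2 / (2*\<gamma>) \<noteq> 0"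
    and "\<bar>x\<bar> \<le> \<alpha>"
  shows "x^2 / (2*\<gamma>) \<le> 1 - cos x"
proof -
  define g where "g a = 1 - cos a - a^2 / (2*\<gamma>)" for a
  have "eventually (\<lambda>a. 1/(2*\<gamma>) * a^2 < 1 - cos a) (at_right 0)"
    using \<open>\<gamma> > 1\<close> by (intro eventually_quadratic_less_one_minus_cos) (simp add: field_simps)
  then have "eventually (\<lambda>a. g a > 0) (at_right 0)"
    by eventually_elim (simp add: g_def)
  moreover have "continuous_on {0<..<\<alpha>} g"
    using \<open>\<gamma> > 1\<close> unfolding g_def by (intro continuous_intros) auto
  ultimately have "g \<bar>x\<bar> \<ge> 0"
    using pos_before_first_zero[of 0 \<alpha> g "\<bar>x\<bar>"] first_root root \<open>\<bar>x\<bar> \<le> \<alpha>\<close>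
    unfolding g_def by (cases "x = 0 \<or> \<bar>x\<bar> = \<alpha>") force+
  then show ?thesis
    unfolding g_def by simp
qed

theorem lemma1:
  fixes \<gamma> :: real and N :: nat and \<alpha>s :: real
  assumes "\<gamma> > 1" and "N > 6"
    and "\<alpha>s > 0"
    and "1 - cos \<alpha>s - \<alpha>s^2 / (2*\<gamma>) = 0"
    and "\<And>a. 0 < a \<Longrightarrow> a < \<alpha>s \<Longrightarrow> 1 - cos a - a^2 / (2*\<gamma>) \<noteq> 0"
  shows "\<forall>z::real. -\<alpha>s / real N \<le> z \<and> z \<le> \<alpha>s / real N \<longrightarrow>
           cos z - \<gamma> / (real N)^2 * (cos (real N * z) - 1) - 1 \<ge> 0"
proof (intro allI impI)
  fix z :: real
  assume z: "-\<alpha>s / real N \<le> z \<and> z \<le> \<alpha>s / real N"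
  have N_pos: "real N > 0"
    using \<open>N > 6\<close> by simp
  with z have "\<bar>real N * z\<bar> \<le> \<alpha>s"
    by (simp add: abs_le_iff field_simps)
  then have "(real N * z)^2 / (2*\<gamma>) \<le> 1 - cos (real N * z)"
    using assms by (intro quadratic_le_one_minus_cos_up_to_first_root) auto
  then have "z^2 / 2 \<le> \<gamma> / (real N)^2 * (1 - cos (real N * z))"
    using N_pos \<open>\<gamma> > 1\<close> by (simp add: field_simps power_mult_distrib)
  moreover have "\<gamma> / (real N)^2 * (cos (real N * z) - 1) = - (\<gamma> / (real N)^2 * (1 - cos (real N * z)))"
    by (simp add: right_diff_distrib)
  ultimately show "cos z - \<gamma> / (real N)^2 * (cos (real N * z) - 1) - 1 \<ge> 0"
    using one_minus_cos_le_half_square[of z] by linarith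
qed

end
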